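(* Let $n\ge1$ and $K=[1/\max(i,j)]_{i,j=1}^n$. Then $K$ is invertible, $\|K\|\le 4$, and $\|K^{-1}\|\le 4n^2$, where $\|\cdot\|$ denotes the operator (spectral) norm. *)

theory Defs
  imports "HOL-Analysis.Analysis"
begin

text \<open>The index type 'n (of cardinality n = CARD('n)) is linearly ordered;
  idx i is the 1-based position of i, so idx is a bijection onto {1..n}.\<close>
definition idx :: "'n::{finite,linorder} \<Rightarrow> nat" where
  "idx i = card {j. j \<le> i}"

definition Kmat :: "real ^ 'n::{finite,linorder} ^ 'n::{finite,linorder}" where
  "Kmat = (\<chi> i j. 1 / real (max (idx i) (idx j)))"

end

theory Submission
  imports Defs
begin

text \<open>Upper bound: Schur's test with the weights \<open>w j = 1 / sqrt j\<close>. The weighted row sum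
  \<open>\<Sum>j. w j / max i j\<close> splits into \<open>(\<Sum>j\<le>i. j powr (-1/2)) / i\<close> and \<open>\<Sum>j>i. j powr (-3/2)\<close>,
  and telescoping (\<open>j powr (-1/2) \<le> 2 (sqrt j - sqrt (j - 1))\<close>,
  \<open>j powr (-3/2) \<le> 2 / sqrt (j - 1) - 2 / sqrt j\<close>) bounds each part by \<open>2 w i\<close>.

  Lower bound: Abel summation with the partial sums \<open>S k = x 1 + \<dots> + x k\<close> gives
  \<open>x \<bullet> K x = (\<Sum>k<n. S k\<^sup>2 / (k (k + 1))) + S n\<^sup>2 / n \<ge> (\<Sum>k\<le>n. S k\<^sup>2) / n\<^sup>2\<close>, and
  \<open>x k = S k - S (k - 1)\<close> gives \<open>\<parallel>x\<parallel>\<^sup>2 \<le> 4 (\<Sum>k\<le>n. S k\<^sup>2)\<close>. With Cauchy--Schwarz,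
  \<open>\<parallel>x\<parallel> \<le> 4 n\<^sup>2 \<parallel>K x\<parallel>\<close>, which yields both the invertibility of \<open>K\<close> and the bound on \<open>K\<inverse>\<close>.\<close>

lemma inverse_sqrt_Suc_le:
  "1 / sqrt (real (Suc k)) \<le> 2 * (sqrt (real (Suc k)) - sqrt (real k))"
proof -
  define a b where "a = sqrt (real k)" and "b = sqrt (real (Suc k))"
  have "0 \<le> a" "0 < b" "a \<le> b" and diff: "(b - a) * (b + a) = 1"
    by (auto simp: a_def b_def algebra_simps)
  then have "2 / (b + b) \<le> 2 / (b + a)"
    by (intro divide_left_mono) auto
  also have "\<dots> = 2 * ((b - a) * (b + a)) / (b + a)"
    using diff by simp
  also have "\<dots> = 2 * (b - a)"
    using \<open>0 \<le> a\<close> \<open>0 < b\<close> by simp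
  finally show ?thesis
    by (simp add: a_def b_def)
qed

lemma sum_inverse_sqrt_le: "(\<Sum>j=1..n. 1 / sqrt (real j)) \<le> 2 * sqrt (real n)"
proof (induction n)
  case (Suc n)
  then show ?case
    using inverse_sqrt_Suc_le[of n] by simp
qed simp

lemma inverse_sqrt_cube_Suc_le:
  assumes "0 < k"
  shows "1 / (real (Suc k) * sqrt (real (Suc k))) \<le> 2 / sqrt (real k) - 2 / sqrt (real (Suc k))"
proof -
  define a b where "a = sqrt (real k)" and "b = sqrt (real (Suc k))"
  have pos: "0 < a" "0 < b" and "a \<le> b" and diff: "(b - a) * (b + a) = 1"
    using assms by (auto simp: a_def b_def algebra_simps)
  have "a * b * (b + a) \<le> b * b * (b + b)"
    using pos \<open>a \<le> b\<close> by (intro mult_mono) auto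
  then have "2 / (b * b * (b + b)) \<le> 2 / (a * b * (b + a))"
    using pos by (intro divide_left_mono) auto
  also have "\<dots> = 2 * ((b - a) * (b + a)) / (a * b * (b + a))"
    using diff by simp
  also have "\<dots> = 2 / a - 2 / b"
    using pos by (simp add: field_simps add_pos_pos[THEN less_imp_neq, symmetric])
  finally show ?thesis
    using pos by (simp add: a_def b_def power2_eq_square)
qed

lemma sum_inverse_sqrt_cube_le:
  assumes "1 \<le> i" "i \<le> n"
  shows "(\<Sum>j\<in>{i<..n}. 1 / (real j * sqrt (real j))) \<le> 2 / sqrt (real i) - 2 / sqrt (real n)"
  using assms(2)
proof (induction n rule: dec_induct)
  case (step n)
  have "{i<..Suc n} = insert (Suc n) {i<..n}"
    using step.hyps by auto
  then show ?case
    using step.IH inverse_sqrt_cube_Suc_le[of n] assms(1) step.hyps by simp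
qed simp

lemma max_kernel_row_sum_le:
  assumes "1 \<le> i" "i \<le> n"
  shows "(\<Sum>j=1..n. 1 / real (max i j) * (1 / sqrt (real j))) \<le> 4 * (1 / sqrt (real i))"
proof -
  have split: "{1..n} = {1..i} \<union> {i<..n}"
    using assms by auto
  have "(\<Sum>j=1..n. 1 / real (max i j) * (1 / sqrt (real j)))
      = (\<Sum>j=1..i. 1 / real (max i j) * (1 / sqrt (real j)))
        + (\<Sum>j\<in>{i<..n}. 1 / real (max i j) * (1 / sqrt (real j)))"
    unfolding split by (rule sum.union_disjoint) auto
  also have "\<dots> = (\<Sum>j=1..i. 1 / sqrt (real j)) / real i + (\<Sum>j\<in>{i<..n}. 1 / (real j * sqrt (real j)))"
    unfolding sum_divide_distrib by (intro arg_cong2[where f = "(+)"] sum.cong) (auto simp: max_def)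
  also have "\<dots> \<le> 2 * sqrt (real i) / real i + 2 / sqrt (real i)"
  proof (rule add_mono)
    show "(\<Sum>j=1..i. 1 / sqrt (real j)) / real i \<le> 2 * sqrt (real i) / real i"
      using sum_inverse_sqrt_le[of i] by (intro divide_right_mono) auto
    show "(\<Sum>j\<in>{i<..n}. 1 / (real j * sqrt (real j))) \<le> 2 / sqrt (real i)"
      using sum_inverse_sqrt_cube_le[OF assms]
      by (smt (verit) divide_nonneg_nonneg real_sqrt_ge_zero of_nat_0_le_iff)
  qed
  also have "2 * sqrt (real i) / real i = 2 / sqrt (real i)"
    using assms(1) by (simp add: field_simps)
  finally show ?thesis
    by simp
qed

lemma weighted_Cauchy_Schwarz_sum:
  fixes p y :: "'a \<Rightarrow> real"
  assumes "\<And>j. j \<in> A \<Longrightarrow> 0 \<le> p j"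
  shows "(\<Sum>j\<in>A. p j * y j)\<^sup>2 \<le> (\<Sum>j\<in>A. p j) * (\<Sum>j\<in>A. p j * (y j)\<^sup>2)"
proof -
  have "(\<Sum>j\<in>A. p j * y j) = (\<Sum>j\<in>A. sqrt (p j) * (sqrt (p j) * y j))"
    using assms by (intro sum.cong) (auto simp: mult.assoc[symmetric])
  also have "(\<dots>)\<^sup>2 \<le> (\<Sum>j\<in>A. (sqrt (p j))\<^sup>2) * (\<Sum>j\<in>A. (sqrt (p j) * y j)\<^sup>2)"
    by (rule Cauchy_Schwarz_ineq_sum)
  also have "\<dots> = (\<Sum>j\<in>A. p j) * (\<Sum>j\<in>A. p j * (y j)\<^sup>2)"
    using assms by (simp add: power_mult_distrib)
  finally show ?thesis .
qed

lemma Schur_test: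
  fixes K :: "'a \<Rightarrow> 'a \<Rightarrow> real" and w f :: "'a \<Rightarrow> real"
  assumes K_nonneg: "\<And>i j. i \<in> A \<Longrightarrow> j \<in> A \<Longrightarrow> 0 \<le> K i j"
    and K_sym: "\<And>i j. i \<in> A \<Longrightarrow> j \<in> A \<Longrightarrow> K i j = K j i"
    and w_pos: "\<And>j. j \<in> A \<Longrightarrow> 0 < w j"
    and row: "\<And>i. i \<in> A \<Longrightarrow> (\<Sum>j\<in>A. K i j * w j) \<le> c * w i"
  shows "(\<Sum>i\<in>A. (\<Sum>j\<in>A. K i j * f j)\<^sup>2) \<le> c\<^sup>2 * (\<Sum>i\<in>A. (f i)\<^sup>2)"
proof (cases "A = {}")
  case False
  then obtain i0 where "i0 \<in> A"
    by blast
  have "0 \<le> c * w i0"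
    using row[OF \<open>i0 \<in> A\<close>] K_nonneg w_pos \<open>i0 \<in> A\<close>
    by (smt (verit) sum_nonneg mult_nonneg_nonneg)
  then have c: "0 \<le> c"
    using w_pos[OF \<open>i0 \<in> A\<close>] by (simp add: zero_le_mult_iff)
  define g where "g j = (f j)\<^sup>2 / w j" for j
  have g_nonneg: "0 \<le> g j" if "j \<in> A" for j
    using w_pos[OF that] by (simp add: g_def)
  have row_sq: "(\<Sum>j\<in>A. K i j * f j)\<^sup>2 \<le> c * w i * (\<Sum>j\<in>A. K i j * g j)" if "i \<in> A" for i
  proof -
    have "(\<Sum>j\<in>A. K i j * f j) = (\<Sum>j\<in>A. (K i j * w j) * (f j / w j))"
      using w_pos by (intro sum.cong) (auto simp: less_imp_neq[symmetric])
    also have "(\<dots>)\<^sup>2 \<le> (\<Sum>j\<in>A. K i j * w j) * (\<Sum>j\<in>A. (K i j * w j) * (f j / w j)\<^sup>2)"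
      using that by (intro weighted_Cauchy_Schwarz_sum mult_nonneg_nonneg) (auto simp: K_nonneg less_imp_le w_pos)
    also have "(\<Sum>j\<in>A. (K i j * w j) * (f j / w j)\<^sup>2) = (\<Sum>j\<in>A. K i j * g j)"
      using w_pos by (intro sum.cong) (auto simp: g_def power2_eq_square less_imp_neq[symmetric])
    also have "(\<Sum>j\<in>A. K i j * w j) * \<dots> \<le> c * w i * (\<Sum>j\<in>A. K i j * g j)"
      using row[OF that] that K_nonneg g_nonneg by (intro mult_right_mono sum_nonneg) auto
    finally show ?thesis .
  qed
  have "(\<Sum>i\<in>A. (\<Sum>j\<in>A. K i j * f j)\<^sup>2) \<le> (\<Sum>i\<in>A. c * w i * (\<Sum>j\<in>A. K i j * g j))"
    by (intro sum_mono row_sq)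
  also have "\<dots> = c * (\<Sum>i\<in>A. \<Sum>j\<in>A. g j * (K j i * w i))"
    unfolding sum_distrib_left using K_sym by (intro sum.cong refl) (simp add: mult_ac)
  also have "\<dots> = c * (\<Sum>j\<in>A. g j * (\<Sum>i\<in>A. K j i * w i))"
    by (subst sum.swap) (simp add: sum_distrib_left)
  also have "\<dots> \<le> c * (\<Sum>j\<in>A. g j * (c * w j))"
    using row g_nonneg c by (intro mult_left_mono sum_mono) auto
  also have "(\<Sum>j\<in>A. g j * (c * w j)) = c * (\<Sum>i\<in>A. (f i)\<^sup>2)"
    unfolding sum_distrib_left using w_pos by (intro sum.cong refl) (simp add: g_def less_imp_neq[symmetric])
  also have "c * (c * (\<Sum>i\<in>A. (f i)\<^sup>2)) = c\<^sup>2 * (\<Sum>i\<in>A. (f i)\<^sup>2)"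
    by (simp add: power2_eq_square)
  finally show ?thesis .
qed simp

lemma max_kernel_form_Suc:
  fixes f :: "nat \<Rightarrow> real"
  shows "(\<Sum>i=1..Suc m. \<Sum>j=1..Suc m. f i * f j / real (max i j))
       = (\<Sum>i=1..m. \<Sum>j=1..m. f i * f j / real (max i j))
         + ((\<Sum>j=1..Suc m. f j)\<^sup>2 - (\<Sum>j=1..m. f j)\<^sup>2) / real (Suc m)"
proof -
  let ?F = "f (Suc m)" and ?S = "\<Sum>j=1..m. f j"
  have col: "(\<Sum>i=1..m. f i * ?F / real (max i (Suc m))) = ?S * ?F / real (Suc m)"
    by (simp add: sum_divide_distrib sum_distrib_right max_def)
  have row: "(\<Sum>j=1..m. ?F * f j / real (max (Suc m) j)) = ?S * ?F / real (Suc m)"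
    by (simp add: sum_divide_distrib sum_distrib_left max_def mult.commute)
  have "(\<Sum>i=1..Suc m. \<Sum>j=1..Suc m. f i * f j / real (max i j))
      = (\<Sum>i=1..m. \<Sum>j=1..m. f i * f j / real (max i j)) + (2 * ?S * ?F + ?F * ?F) / real (Suc m)"
    using col row by (simp add: sum.distrib add_divide_distrib)
  then show ?thesis
    by (simp add: power2_eq_square algebra_simps)
qed

lemma max_kernel_form_eq:
  fixes f :: "nat \<Rightarrow> real"
  shows "(\<Sum>i=1..n. \<Sum>j=1..n. f i * f j / real (max i j))
       = (\<Sum>k=1..<n. (\<Sum>j=1..k. f j)\<^sup>2 / (real k * real (Suc k))) + (\<Sum>j=1..n. f j)\<^sup>2 / real n"
proof (induction n)
  case (Suc m)
  let ?S = "\<Sum>j=1..m. f j"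
  have "?S\<^sup>2 / real m - ?S\<^sup>2 / real (Suc m) = ?S\<^sup>2 / (real m * real (Suc m))"
    by (cases "m = 0") (simp_all add: field_simps)
  moreover have "(\<Sum>k=1..<Suc m. (\<Sum>j=1..k. f j)\<^sup>2 / (real k * real (Suc k)))
      = (\<Sum>k=1..<m. (\<Sum>j=1..k. f j)\<^sup>2 / (real k * real (Suc k))) + ?S\<^sup>2 / (real m * real (Suc m))"
    by (cases m) simp_all
  ultimately show ?case
    unfolding max_kernel_form_Suc Suc.IH diff_divide_distrib by linarith
qed simp

lemma sum_squares_le_partial_sums:
  fixes f :: "nat \<Rightarrow> real"
  shows "(\<Sum>k=1..n. (f k)\<^sup>2) \<le> 4 * (\<Sum>k=1..n. (\<Sum>j=1..k. f j)\<^sup>2)"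
proof -
  \<comment> \<open>The correction term \<open>- 2 S n\<^sup>2\<close> pays for the \<open>2 S n\<^sup>2\<close> in \<open>f (n + 1)\<^sup>2 \<le> 2 S (n + 1)\<^sup>2 + 2 S n\<^sup>2\<close>.\<close>
  have "(\<Sum>k=1..n. (f k)\<^sup>2) \<le> 4 * (\<Sum>k=1..n. (\<Sum>j=1..k. f j)\<^sup>2) - 2 * (\<Sum>j=1..n. f j)\<^sup>2"
  proof (induction n)
    case (Suc n)
    let ?S = "\<Sum>j=1..n. f j"
    have "(f (Suc n))\<^sup>2 \<le> 2 * (?S + f (Suc n))\<^sup>2 + 2 * ?S\<^sup>2"
      using zero_le_power2[of "f (Suc n) + 2 * ?S"] by (simp add: power2_eq_square algebra_simps)
    with Suc.IH show ?case
      by simp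
  qed simp
  then show ?thesis
    by (smt (verit) zero_le_power2)
qed

lemma max_kernel_form_ge:
  fixes f :: "nat \<Rightarrow> real"
  assumes "1 \<le> n"
  shows "(\<Sum>i=1..n. (f i)\<^sup>2) \<le> 4 * (real n)\<^sup>2 * (\<Sum>i=1..n. \<Sum>j=1..n. f i * f j / real (max i j))"
proof -
  define S where "S k = (\<Sum>j=1..k. f j)" for k
  have "(\<Sum>k=1..n. (S k)\<^sup>2) / (real n)\<^sup>2
      = (\<Sum>k=1..<n. (S k)\<^sup>2 / (real n)\<^sup>2) + (S n)\<^sup>2 / (real n)\<^sup>2"
    using assms by (simp add: sum_divide_distrib add_divide_distrib atLeastLessThanSuc_atLeastAtMost[symmetric] del: atLeastLessThanSuc_atLeastAtMost)
  also have "\<dots> \<le> (\<Sum>k=1..<n. (S k)\<^sup>2 / (real k * real (Suc k))) + (S n)\<^sup>2 / real n"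
  proof (rule add_mono)
    show "(\<Sum>k=1..<n. (S k)\<^sup>2 / (real n)\<^sup>2) \<le> (\<Sum>k=1..<n. (S k)\<^sup>2 / (real k * real (Suc k)))"
    proof (rule sum_mono)
      fix k assume "k \<in> {1..<n}"
      then have "real k * real (Suc k) \<le> real n * real n" "0 < real k * real (Suc k)"
        by (auto intro: mult_mono)
      then show "(S k)\<^sup>2 / (real n)\<^sup>2 \<le> (S k)\<^sup>2 / (real k * real (Suc k))"
        by (intro divide_left_mono) (auto simp: power2_eq_square)
    qed
    show "(S n)\<^sup>2 / (real n)\<^sup>2 \<le> (S n)\<^sup>2 / real n"
      using assms by (intro divide_left_mono) (auto simp: power2_eq_square)
  qed
  also have "\<dots> = (\<Sum>i=1..n. \<Sum>j=1..n. f i * f j / real (max i j))"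
    unfolding S_def by (rule max_kernel_form_eq[symmetric])
  finally show ?thesis
    using sum_squares_le_partial_sums[of f n] assms unfolding S_def by (simp add: field_simps)
qed

lemma strict_mono_idx: "strict_mono (idx :: 'n::{finite,linorder} \<Rightarrow> nat)"
proof (rule strict_monoI)
  fix i i' :: 'n
  assume "i < i'"
  then have "{j. j \<le> i} \<subseteq> {j. j \<le> i'}" and "i' \<in> {j. j \<le> i'} - {j. j \<le> i}"
    by auto
  then have "{j. j \<le> i} \<subset> {j. j \<le> i'}"
    by blast
  then show "idx i < idx i'"
    unfolding idx_def by (intro psubset_card_mono) auto
qed

lemma inj_idx: "inj (idx :: 'n::{finite,linorder} \<Rightarrow> nat)"
  using strict_mono_idx by (rule strict_mono_imp_inj_on)

lemma idx_in_range: "idx (i :: 'n::{finite,linorder}) \<in> {1..CARD('n)}"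
proof -
  have "0 < card {j. j \<le> i}"
    by (subst card_gt_0_iff) auto
  moreover have "card {j. j \<le> i} \<le> CARD('n)"
    by (intro card_mono) auto
  ultimately show ?thesis
    by (simp add: idx_def)
qed

lemma bij_betw_idx: "bij_betw (idx :: 'n::{finite,linorder} \<Rightarrow> nat) UNIV {1..CARD('n)}"
proof -
  have "idx ` (UNIV :: 'n set) \<subseteq> {1..CARD('n)}"
    using idx_in_range by blast
  then have "idx ` (UNIV :: 'n set) = {1..CARD('n)}"
    using card_image[OF inj_idx] by (intro card_subset_eq) auto
  then show ?thesis
    using inj_idx by (simp add: bij_betw_def)
qed

lemma sum_reindex_idx:
  "(\<Sum>i\<in>(UNIV :: 'n::{finite,linorder} set). h (idx i)) = (\<Sum>k=1..CARD('n). h k)"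
  using sum.reindex_bij_betw[OF bij_betw_idx] .

lemma norm_vec_power2: "(norm (x :: real ^ 'n))\<^sup>2 = (\<Sum>i\<in>UNIV. (x $ i)\<^sup>2)"
  unfolding power2_norm_eq_inner inner_vec_def by (simp add: power2_eq_square)

lemma norm_Kmat_mult_le:
  fixes x :: "real ^ 'n::{finite,linorder}"
  shows "norm (Kmat *v x) \<le> 4 * norm x"
proof -
  define w where "w j = 1 / sqrt (real (idx j))" for j :: 'n
  have "(norm (Kmat *v x))\<^sup>2 = (\<Sum>i\<in>UNIV. (\<Sum>j\<in>UNIV. Kmat $ i $ j * x $ j)\<^sup>2)"
    by (simp add: norm_vec_power2 matrix_vector_mult_def)
  also have "\<dots> \<le> 4\<^sup>2 * (\<Sum>i\<in>UNIV. (x $ i)\<^sup>2)"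
  proof (rule Schur_test)
    show "0 < w j" for j
      using idx_in_range[of j] by (simp add: w_def)
    show "(\<Sum>j\<in>UNIV. Kmat $ i $ j * w j) \<le> 4 * w i" for i
      using max_kernel_row_sum_le[of "idx i" "CARD('n)"] idx_in_range[of i]
        sum_reindex_idx[of "\<lambda>k. 1 / real (max (idx i) k) * (1 / sqrt (real k))", where 'n = 'n]
      by (simp add: Kmat_def w_def)
  qed (simp_all add: Kmat_def max.commute)
  also have "\<dots> = (4 * norm x)\<^sup>2"
    by (simp add: norm_vec_power2 power_mult_distrib)
  finally show ?thesis
    by (rule power2_le_imp_le) simp
qed

lemma inner_Kmat_mult:
  fixes x :: "real ^ 'n::{finite,linorder}"
  defines "f \<equiv> \<lambda>k. x $ inv (idx :: 'n \<Rightarrow> nat) k"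
  shows "inner x (Kmat *v x)
       = (\<Sum>i=1..CARD('n). \<Sum>j=1..CARD('n). f i * f j / real (max i j))"
proof -
  have x_idx: "x $ i = f (idx i)" for i
    by (simp add: f_def inj_idx)
  have row_reindex: "(\<Sum>j\<in>(UNIV :: 'n set). f m * f (idx j) / real (max m (idx j)))
      = (\<Sum>j=1..CARD('n). f m * f j / real (max m j))" for m
    by (rule sum_reindex_idx[of "\<lambda>j. f m * f j / real (max m j)"])
  have "inner x (Kmat *v x)
      = (\<Sum>i\<in>(UNIV :: 'n set). \<Sum>j\<in>(UNIV :: 'n set). f (idx i) * f (idx j) / real (max (idx i) (idx j)))"
    by (simp add: inner_vec_def matrix_vector_mult_def Kmat_def x_idx sum_distrib_left mult_ac)
  also have "\<dots> = (\<Sum>i\<in>(UNIV :: 'n set). \<Sum>j=1..CARD('n). f (idx i) * f j / real (max (idx i) j))"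
    by (simp only: row_reindex)
  also have "\<dots> = (\<Sum>i=1..CARD('n). \<Sum>j=1..CARD('n). f i * f j / real (max i j))"
    by (rule sum_reindex_idx[of "\<lambda>i. \<Sum>j=1..CARD('n). f i * f j / real (max i j)"])
  finally show ?thesis .
qed

lemma norm_le_Kmat_mult:
  fixes x :: "real ^ 'n::{finite,linorder}"
  shows "norm x \<le> 4 * real (CARD('n))^2 * norm (Kmat *v x)"
proof -
  define c where "c = 4 * real (CARD('n))^2"
  define f where "f k = x $ inv (idx :: 'n \<Rightarrow> nat) k" for k
  have "(norm x)\<^sup>2 = (\<Sum>k=1..CARD('n). (f k)\<^sup>2)"
    unfolding norm_vec_power2 f_def using sum_reindex_idx[of "\<lambda>k. (x $ inv idx k)\<^sup>2", where 'n = 'n]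
    by (simp add: inj_idx)
  also have "\<dots> \<le> c * inner x (Kmat *v x)"
    unfolding c_def inner_Kmat_mult f_def by (rule max_kernel_form_ge) simp
  also have "\<dots> \<le> c * (norm x * norm (Kmat *v x))"
    unfolding c_def by (intro mult_left_mono norm_cauchy_schwarz) simp
  finally have "norm x * norm x \<le> norm x * (c * norm (Kmat *v x))"
    by (simp add: power2_eq_square mult_ac)
  then show ?thesis
    unfolding c_def[symmetric] by (cases "x = 0") simp_all
qed

lemma invertible_if_bounded_below:
  fixes A :: "real ^ 'n ^ 'n"
  assumes "\<And>x. norm x \<le> c * norm (A *v x)"
  shows "invertible A"
proof -
  have "\<forall>x. A *v x = 0 \<longrightarrow> x = 0"
    using assms by (metis mult_zero_right norm_le_zero_iff norm_zero)
  then show ?thesis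
    unfolding invertible_left_inverse matrix_left_invertible_ker .
qed

lemma onorm_matrix_inv_le:
  fixes A :: "real ^ 'n ^ 'n"
  assumes "\<And>x. norm x \<le> c * norm (A *v x)"
  shows "onorm (\<lambda>y. matrix_inv A *v y) \<le> c"
proof (rule onorm_le)
  fix y :: "real ^ 'n"
  have "A ** matrix_inv A = mat 1"
    using invertible_if_bounded_below[OF assms] unfolding invertible_def matrix_inv_def
    by (rule someI_ex[THEN conjunct1])
  then show "norm (matrix_inv A *v y) \<le> c * norm y"
    using assms[of "matrix_inv A *v y"] by (simp add: matrix_vector_mul_assoc)
qed

theorem proposition4:
  shows "invertible (Kmat :: real ^ 'n::{finite,linorder} ^ 'n::{finite,linorder})
     \<and> onorm (\<lambda>x. (Kmat :: real ^ 'n::{finite,linorder} ^ 'n::{finite,linorder}) *v x) \<le> 4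
     \<and> onorm (\<lambda>x. matrix_inv (Kmat :: real ^ 'n::{finite,linorder} ^ 'n::{finite,linorder}) *v x)
         \<le> 4 * real (CARD('n::{finite,linorder}))^2"
  using invertible_if_bounded_below[OF norm_le_Kmat_mult] onorm_le[OF norm_Kmat_mult_le]
    onorm_matrix_inv_le[OF norm_le_Kmat_mult] by blast

end
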